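(* In the Cucker–Smale setting below, assume $\sum_{p=0}^{\infty}\ln\left(\frac{e^{\tilde K(t_{2p+2}-t_{2p+1})}}{2-e^{\tilde K(t_{2p+2}-t_{2p+1})}}\right)<+\infty$. Then for all $t\ge0$, $$d_V(t)\le\bar M^0:=e^{\sum_{p=0}^{\infty}\ln\left(\frac{e^{\tilde K(t_{2p+2}-t_{2p+1})}}{2-e^{\tilde K(t_{2p+2}-t_{2p+1})}}\right)}d_V(0).$$
   Context: Setting: $N\ge2$; $\tilde\psi:\mathbb{R}\to\mathbb{R}$ positive, bounded, continuous, with $\tilde K:=\|\tilde\psi\|_\infty$ and $\int_0^\infty\min_{r\in[0,x]}\tilde\psi(r)dx=+\infty$; $\{t_n\}_{n\in\mathbb{N}_0}$ increasing, nonnegative, $t_0=0$, $t_n\to\infty$, with $t_{2n+2}-t_{2n+1}<\frac{\ln2}{\tilde K}$ and $t_{2n+1}-t_{2n}>\frac1{\tilde K}$ for all $n$; $\alpha(0)=1$, $\alpha=1$ on $(t_{2n},t_{2n+1})$, $\alpha=-1$ on $[t_{2n+1},t_{2n+2}]$. $\{(x_i,v_i)\}$ solves $x_i'=v_i$, $v_i'(t)=\frac1{N-1}\sum_{j\ne i}\alpha(t)\tilde\psi(|x_i(t)-x_j(t)|)(v_j(t)-v_i(t))$, $t>0$, $x_i(0)=x_i^0$, $v_i(0)=v_i^0\in\mathbb{R}^d$ (continuous, $C^1$ on each $(t_n,t_{n+1})$). $d_V(t):=\max_{i,j}|v_i(t)-v_j(t)|$. *)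

theory Defs
  imports "HOL-Analysis.Analysis"
begin

definition alpha_sw :: "(nat \<Rightarrow> real) \<Rightarrow> real \<Rightarrow> real" where
  "alpha_sw ts t = (if t = 0 then 1
     else if (\<exists>n. ts (2*n) < t \<and> t < ts (2*n+1)) then 1 else -1)"

definition dV :: "nat \<Rightarrow> (nat \<Rightarrow> real \<Rightarrow> 'a::real_normed_vector) \<Rightarrow> real \<Rightarrow> real" where
  "dV N v t = Max {norm (v i t - v j t) | i j. i < N \<and> j < N}"

end

theory Submission
  imports Defs
begin

(*
  Let D be the velocity diameter. If the pair (i, j) realises D at some time, every other
  velocity lies within distance |v_i - v_j| of both v_i and v_j, so for alpha = 1 the coupling
  pulls v_i and v_j towards each other and D is nonincreasing on each positive phase
  [t_2n, t_2n+1]. On any phase the coupling term has norm at most K D, so D grows at most by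
  the factor exp (2 K tau_p) on the negative phase of length tau_p; since y / (2 - y) >= y^2
  for 0 < y < 2, this factor is at most exp (K tau_p) / (2 - exp (K tau_p)). Chaining the
  periods gives the bound. Both growth statements are proved for the maximum of the finitely
  many functions |v_i - v_j|^2 by a barrier argument at a first touching time.
*)

section \<open>Growth of the maximum of finitely many functions\<close>

lemma closed_real_induction:
  fixes a b :: real
  assumes "closed S" "a \<in> S" "a \<le> b"
    and step: "\<And>s. s \<in> S \<Longrightarrow> a \<le> s \<Longrightarrow> s < b \<Longrightarrow> eventually (\<lambda>y. y \<in> S) (at_right s)"
  shows "\<exists>s\<in>S. b \<le> s"
proof -
  define T where "T = S \<inter> {a..b}"
  have T: "closed T" "a \<in> T" "bdd_above T"
    using assms(1-3) by (auto simp: T_def)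
  define s where "s = Sup T"
  have sT: "s \<in> T"
    unfolding s_def using T closed_contains_Sup by blast
  show ?thesis
  proof (cases "s < b")
    case True
    have "eventually (\<lambda>y. y \<in> S \<and> y \<in> {s<..<b}) (at_right s)"
      using step[of s] sT True eventually_at_right_real[OF True]
      by (auto simp: T_def intro: eventually_conj)
    then obtain y where "y \<in> S" "s < y" "y < b"
      using eventually_happens[of _ "at_right s"] by auto
    then have "y \<in> T" "s < y"
      using sT by (auto simp: T_def)
    with T(3) show ?thesis
      unfolding s_def by (meson cSup_upper not_less)
  next
    case False
    then show ?thesis using sT by (auto simp: T_def)
  qed
qed

lemma eventually_at_right_le_affine:
  fixes g :: "real \<Rightarrow> real"
  assumes "s < b" "0 \<le> e" "continuous_on {s..b} g" "g s \<le> c"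
    and touching: "g s = c \<Longrightarrow> (g has_real_derivative g') (at s) \<and> g' < e"
  shows "eventually (\<lambda>y. g y \<le> c + e * (y - s)) (at_right s)"
proof (cases "g s < c")
  case True
  have "(g \<longlongrightarrow> g s) (at s within {s..b})"
    using assms(1,3) by (simp add: continuous_on_def)
  then have "(g \<longlongrightarrow> g s) (at_right s)"
    by (simp add: at_within_Icc_at_right[OF assms(1)])
  from order_tendstoD(2)[OF this True] eventually_at_right_less[of s] show ?thesis
  proof eventually_elim
    case (elim y)
    moreover have "0 \<le> e * (y - s)"
      using \<open>0 \<le> e\<close> elim by simp
    ultimately show ?case
      by linarith
  qed
next
  case False
  with assms(4) have "g s = c"
    by simp
  with touching have deriv: "(g has_real_derivative g') (at s)" and "g' < e"
    by auto
  have "((\<lambda>y. (g y - g s) / (y - s)) \<longlongrightarrow> g') (at_right s)"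
    using has_field_derivative_at_within[OF deriv] by (simp add: has_field_derivative_iff)
  from order_tendstoD(2)[OF this \<open>g' < e\<close>] eventually_at_right_less[of s] show ?thesis
  proof eventually_elim
    case (elim y)
    then have "g y - g s < e * (y - s)"
      by (simp add: divide_less_eq)
    with \<open>g s = c\<close> show ?case
      by simp
  qed
qed

lemma finite_family_le_barrier:
  fixes f f' :: "'p \<Rightarrow> real \<Rightarrow> real"
  assumes "finite P" "a \<le> b" "e > 0"
    and cont: "\<And>p. p \<in> P \<Longrightarrow> continuous_on {a..b} (f p)"
    and deriv: "\<And>p t. p \<in> P \<Longrightarrow> t \<in> {a<..<b} \<Longrightarrow> (f p has_real_derivative f' p t) (at t)"
    and deriv_at_max: "\<And>p t. p \<in> P \<Longrightarrow> t \<in> {a<..<b} \<Longrightarrow> (\<forall>q\<in>P. f q t \<le> f p t) \<Longrightarrow> f' p t \<le> 0"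
    and init: "\<And>p. p \<in> P \<Longrightarrow> f p a \<le> M"
  shows "\<forall>p\<in>P. f p b \<le> M + e * (b - a) + e"
proof -
  define bnd where "bnd x = M + e * (x - a) + e" for x
  define S where "S = {x\<in>{a..b}. \<forall>p\<in>P. f p x \<le> bnd x}"
  have "closed {x\<in>{a..b}. f p x \<le> bnd x}" if "p \<in> P" for p
    by (rule continuous_on_closed_Collect_le) (auto simp: bnd_def intro!: cont that continuous_intros)
  moreover have "S = {a..b} \<inter> (\<Inter>p\<in>P. {x\<in>{a..b}. f p x \<le> bnd x})"
    by (auto simp: S_def)
  ultimately have "closed S"
    by auto
  moreover have "a \<in> S"
    using assms(2,3) init by (force simp: S_def bnd_def)
  moreover have "eventually (\<lambda>y. y \<in> S) (at_right s)" if "s \<in> S" "a \<le> s" "s < b" for s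
  proof -
    have "eventually (\<lambda>y. f p y \<le> bnd s + e * (y - s)) (at_right s)" if p: "p \<in> P" for p
    proof (rule eventually_at_right_le_affine)
      show "continuous_on {s..b} (f p)"
        using continuous_on_subset[OF cont[OF p], of "{s..b}"] \<open>a \<le> s\<close> by auto
      show "f p s \<le> bnd s"
        using \<open>s \<in> S\<close> p by (auto simp: S_def)
      assume eq: "f p s = bnd s"
      then have "s \<noteq> a"
        using init[OF p] \<open>e > 0\<close> by (auto simp: bnd_def)
      with \<open>a \<le> s\<close> \<open>s < b\<close> have s: "s \<in> {a<..<b}"
        by auto
      moreover have "\<forall>q\<in>P. f q s \<le> f p s"
        using \<open>s \<in> S\<close> eq by (auto simp: S_def)
      ultimately show "(f p has_real_derivative f' p s) (at s) \<and> f' p s < e"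
        using deriv[OF p s] deriv_at_max[OF p] \<open>e > 0\<close> by fastforce
    qed (use \<open>s < b\<close> \<open>e > 0\<close> in auto)
    then have "eventually (\<lambda>y. f p y \<le> bnd y) (at_right s)" if "p \<in> P" for p
      using that by (simp add: bnd_def algebra_simps)
    then have "eventually (\<lambda>y. \<forall>p\<in>P. f p y \<le> bnd y) (at_right s)"
      using \<open>finite P\<close> by (simp add: eventually_ball_finite)
    with eventually_at_right_real[OF \<open>s < b\<close>] show ?thesis
      by eventually_elim (use \<open>a \<le> s\<close> in \<open>auto simp: S_def\<close>)
  qed
  ultimately obtain s where "s \<in> S" "b \<le> s"
    using closed_real_induction[of S a b] \<open>a \<le> b\<close> by blast
  then show ?thesis
    by (auto simp: S_def bnd_def)
qed

lemma finite_family_max_nonincreasing: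
  fixes f f' :: "'p \<Rightarrow> real \<Rightarrow> real"
  assumes "finite P" "a \<le> b"
    and "\<And>p. p \<in> P \<Longrightarrow> continuous_on {a..b} (f p)"
    and "\<And>p t. p \<in> P \<Longrightarrow> t \<in> {a<..<b} \<Longrightarrow> (f p has_real_derivative f' p t) (at t)"
    and "\<And>p t. p \<in> P \<Longrightarrow> t \<in> {a<..<b} \<Longrightarrow> (\<forall>q\<in>P. f q t \<le> f p t) \<Longrightarrow> f' p t \<le> 0"
    and "\<And>p. p \<in> P \<Longrightarrow> f p a \<le> M"
    and "p \<in> P"
  shows "f p b \<le> M"
proof (rule field_le_epsilon)
  fix e :: real
  assume "e > 0"
  then have "e / (b - a + 1) > 0"
    using \<open>a \<le> b\<close> by simp
  with finite_family_le_barrier[of P a b "e / (b - a + 1)" f f' M] assms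
  have "f p b \<le> M + e / (b - a + 1) * (b - a) + e / (b - a + 1)"
    by blast
  also have "\<dots> = M + e / (b - a + 1) * (b - a + 1)"
    by (simp add: distrib_left)
  also have "\<dots> = M + e"
    using \<open>a \<le> b\<close> by simp
  finally show "f p b \<le> M + e" .
qed

lemma finite_family_max_exp_growth:
  fixes f f' :: "'p \<Rightarrow> real \<Rightarrow> real"
  assumes "finite P" "a \<le> b"
    and cont: "\<And>p. p \<in> P \<Longrightarrow> continuous_on {a..b} (f p)"
    and deriv: "\<And>p t. p \<in> P \<Longrightarrow> t \<in> {a<..<b} \<Longrightarrow> (f p has_real_derivative f' p t) (at t)"
    and deriv_at_max: "\<And>p t. p \<in> P \<Longrightarrow> t \<in> {a<..<b} \<Longrightarrow> (\<forall>q\<in>P. f q t \<le> f p t) \<Longrightarrow> f' p t \<le> c * f p t"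
    and init: "\<And>p. p \<in> P \<Longrightarrow> f p a \<le> M"
    and "p \<in> P"
  shows "f p b \<le> exp (c * (b - a)) * M"
proof -
  define g where "g = (\<lambda>q s. exp (- (c * s)) * f q s)"
  define g' where "g' q s = exp (- (c * s)) * (f' q s - c * f q s)" for q s
  have "g p b \<le> exp (- (c * a)) * M"
  proof (rule finite_family_max_nonincreasing[OF assms(1,2), of g g'])
    show "continuous_on {a..b} (g q)" if "q \<in> P" for q
      unfolding g_def by (intro continuous_intros cont that)
    show "(g q has_real_derivative g' q t) (at t)" if "q \<in> P" "t \<in> {a<..<b}" for q t
    proof -
      have "((\<lambda>s. exp (- (c * s))) has_real_derivative exp (- (c * t)) * (- c)) (at t)"
        by (auto intro!: derivative_eq_intros)
      from DERIV_mult[OF this deriv[OF that]] show ?thesis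
        unfolding g_def g'_def by (simp add: algebra_simps)
    qed
    show "g' q t \<le> 0" if "q \<in> P" "t \<in> {a<..<b}" "\<forall>r\<in>P. g r t \<le> g q t" for q t
      using deriv_at_max[OF that(1,2)] that(3) by (simp add: g_def g'_def mult_le_0_iff)
    show "g q a \<le> exp (- (c * a)) * M" if "q \<in> P" for q
      using init[OF that] by (simp add: g_def)
  qed fact
  then have "exp (c * b) * g p b \<le> exp (c * b) * (exp (- (c * a)) * M)"
    by simp
  moreover have "exp (c * b) * g p b = f p b"
    by (simp add: g_def exp_minus)
  moreover have "exp (c * b) * (exp (- (c * a)) * M) = exp (c * (b - a)) * M"
    by (simp add: mult.assoc[symmetric] exp_add[symmetric] right_diff_distrib)
  ultimately show ?thesis
    by simp
qed

lemma has_real_derivative_power2_norm: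
  fixes u :: "real \<Rightarrow> 'a::real_inner"
  assumes "(u has_vector_derivative u') (at t)"
  shows "((\<lambda>s. (norm (u s))\<^sup>2) has_real_derivative 2 * inner (u t) u') (at t)"
proof -
  have d: "(u has_derivative (\<lambda>h. h *\<^sub>R u')) (at t)"
    using assms by (simp add: has_vector_derivative_def)
  have "((\<lambda>s. inner (u s) (u s)) has_derivative (\<lambda>h. inner (u t) (h *\<^sub>R u') + inner (h *\<^sub>R u') (u t))) (at t)"
    by (rule has_derivative_inner[OF d d])
  moreover have "(\<lambda>h. inner (u t) (h *\<^sub>R u') + inner (h *\<^sub>R u') (u t)) = (*) (2 * inner (u t) u')"
    by (auto simp: inner_commute algebra_simps)
  ultimately show ?thesis
    by (simp add: has_field_derivative_def power2_norm_eq_inner)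
qed

lemma pairwise_distance_exp_growth:
  fixes u :: "nat \<Rightarrow> real \<Rightarrow> 'a::real_inner" and u' :: "real \<Rightarrow> nat \<Rightarrow> 'a"
  assumes "a \<le> b" "i < N" "j < N"
    and cont: "\<And>i. i < N \<Longrightarrow> continuous_on {a..b} (u i)"
    and deriv: "\<And>i s. i < N \<Longrightarrow> s \<in> {a<..<b} \<Longrightarrow> (u i has_vector_derivative u' s i) (at s)"
    and farthest_pair: "\<And>s i j. s \<in> {a<..<b} \<Longrightarrow> i < N \<Longrightarrow> j < N \<Longrightarrow>
        (\<And>k l. k < N \<Longrightarrow> l < N \<Longrightarrow> norm (u k s - u l s) \<le> norm (u i s - u j s)) \<Longrightarrow>
        inner (u i s - u j s) (u' s i - u' s j) \<le> c * (norm (u i s - u j s))\<^sup>2"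
    and init: "\<And>i j. i < N \<Longrightarrow> j < N \<Longrightarrow> norm (u i a - u j a) \<le> M"
  shows "norm (u i b - u j b) \<le> exp (c * (b - a)) * M"
proof -
  define f where "f = (\<lambda>(i, j) s. (norm (u i s - u j s))\<^sup>2)"
  define f' where "f' = (\<lambda>(i, j) s. 2 * inner (u i s - u j s) (u' s i - u' s j))"
  let ?P = "{..<N} \<times> {..<N}"
  have "f (i, j) b \<le> exp ((2 * c) * (b - a)) * M\<^sup>2"
  proof (rule finite_family_max_exp_growth[of ?P a b f f'])
    show "continuous_on {a..b} (f p)" if "p \<in> ?P" for p
      using that unfolding f_def by (auto intro!: continuous_intros cont)
    show "(f p has_real_derivative f' p s) (at s)" if "p \<in> ?P" "s \<in> {a<..<b}" for p s
      using that unfolding f_def f'_def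
      by (auto intro!: has_real_derivative_power2_norm has_vector_derivative_diff deriv)
    show "f' p s \<le> 2 * c * f p s"
      if p: "p \<in> ?P" and s: "s \<in> {a<..<b}" and max: "\<forall>q\<in>?P. f q s \<le> f p s" for p s
    proof -
      obtain i j where "p = (i, j)" "i < N" "j < N"
        using p by auto
      moreover have "norm (u k s - u l s) \<le> norm (u i s - u j s)" if "k < N" "l < N" for k l
      proof -
        have "(norm (u k s - u l s))\<^sup>2 \<le> (norm (u i s - u j s))\<^sup>2"
          using bspec[OF max, of "(k, l)"] \<open>p = (i, j)\<close> that by (simp add: f_def)
        then show ?thesis
          by (rule power2_le_imp_le) simp
      qed
      ultimately show ?thesis
        using farthest_pair[OF s] by (simp add: f_def f'_def)
    qed
    show "f p a \<le> M\<^sup>2" if "p \<in> ?P" for p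
      using that init by (auto simp: f_def intro!: power_mono)
  qed (use assms in auto)
  also have "\<dots> = (exp (c * (b - a)) * M)\<^sup>2"
    by (simp add: power_mult_distrib exp_double[symmetric] mult.assoc)
  finally have "(norm (u i b - u j b))\<^sup>2 \<le> (exp (c * (b - a)) * M)\<^sup>2"
    by (simp add: f_def)
  moreover have "0 \<le> M"
    using init[OF \<open>i < N\<close> \<open>i < N\<close>] by simp
  ultimately show ?thesis
    by (rule power2_le_imp_le[OF _ mult_nonneg_nonneg[OF exp_ge_zero]])
qed

section \<open>Consensus forces and the velocity diameter\<close>

lemma inner_farthest_point_nonpos:
  fixes u w z :: "'a::real_inner"
  assumes "norm (z - w) \<le> norm (u - w)"
  shows "inner (u - w) (z - u) \<le> 0"
proof -
  have "inner (u - w) (z - u) = inner (u - w) (z - w) - inner (u - w) (u - w)"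
    by (simp add: inner_diff_right)
  also have "\<dots> \<le> norm (u - w) * norm (z - w) - (norm (u - w))\<^sup>2"
    using norm_cauchy_schwarz[of "u - w" "z - w"] by (simp add: power2_norm_eq_inner)
  also have "\<dots> \<le> 0"
    using assms by (simp add: power2_eq_square mult_left_mono)
  finally show ?thesis .
qed

definition consensus_force :: "nat \<Rightarrow> (nat \<Rightarrow> nat \<Rightarrow> real) \<Rightarrow> (nat \<Rightarrow> 'a::real_vector) \<Rightarrow> nat \<Rightarrow> 'a"
  where "consensus_force N w u i = (\<Sum>j\<in>{..<N} - {i}. w i j *\<^sub>R (u j - u i))"

lemma norm_consensus_force_le:
  fixes u :: "nat \<Rightarrow> 'a::real_normed_vector"
  assumes "i < N"
    and w: "\<And>j. j < N \<Longrightarrow> \<bar>w i j\<bar> \<le> c"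
    and u: "\<And>j. j < N \<Longrightarrow> norm (u j - u i) \<le> d"
  shows "norm (consensus_force N w u i) \<le> (real N - 1) * c * d"
proof -
  have "norm (consensus_force N w u i) \<le> (\<Sum>j\<in>{..<N} - {i}. \<bar>w i j\<bar> * norm (u j - u i))"
    unfolding consensus_force_def by (rule norm_sum[THEN order_trans]) simp
  also have "\<dots> \<le> (\<Sum>j\<in>{..<N} - {i}. c * d)"
    using w u w[OF \<open>i < N\<close>] u[OF \<open>i < N\<close>] by (intro sum_mono mult_mono) auto
  also have "\<dots> = (real N - 1) * c * d"
    using \<open>i < N\<close> by (simp add: card_Diff_singleton of_nat_diff)
  finally show ?thesis .
qed

lemma inner_consensus_force_farthest_pair:
  fixes u :: "nat \<Rightarrow> 'a::real_inner"
  assumes "i < N" "j < N"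
    and w: "\<And>k l. 0 \<le> w k l"
    and far: "\<And>k l. k < N \<Longrightarrow> l < N \<Longrightarrow> norm (u k - u l) \<le> norm (u i - u j)"
  shows "inner (u i - u j) (consensus_force N w u i - consensus_force N w u j) \<le> 0"
proof -
  have "inner (u i - u j) (consensus_force N w u i) = (\<Sum>k\<in>{..<N} - {i}. w i k * inner (u i - u j) (u k - u i))"
    by (simp add: consensus_force_def inner_sum_right)
  also have "\<dots> \<le> 0"
    using far \<open>j < N\<close> by (intro sum_nonpos mult_nonneg_nonpos w inner_farthest_point_nonpos) auto
  finally have "inner (u i - u j) (consensus_force N w u i) \<le> 0" .
  moreover have "inner (u j - u i) (consensus_force N w u j) = (\<Sum>k\<in>{..<N} - {j}. w j k * inner (u j - u i) (u k - u j))"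
    by (simp add: consensus_force_def inner_sum_right)
  moreover have "\<dots> \<le> 0"
    using far[of _ i] \<open>i < N\<close> by (intro sum_nonpos mult_nonneg_nonpos w inner_farthest_point_nonpos)
      (auto simp: norm_minus_commute)
  moreover have "inner (u i - u j) (consensus_force N w u i - consensus_force N w u j)
      = inner (u i - u j) (consensus_force N w u i) + inner (u j - u i) (consensus_force N w u j)"
    by (simp add: inner_diff_left inner_diff_right)
  ultimately show ?thesis
    by linarith
qed

lemma dV_eq_Max_image:
  "dV N v t = Max ((\<lambda>(i, j). norm (v i t - v j t)) ` ({..<N} \<times> {..<N}))"
  unfolding dV_def by (rule arg_cong[where f = Max]) force

lemma norm_le_dV: "i < N \<Longrightarrow> j < N \<Longrightarrow> norm (v i t - v j t) \<le> dV N v t"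
  unfolding dV_eq_Max_image by (rule Max_ge) force+

lemma dV_le:
  assumes "0 < N" "\<And>i j. i < N \<Longrightarrow> j < N \<Longrightarrow> norm (v i t - v j t) \<le> B"
  shows "dV N v t \<le> B"
  unfolding dV_eq_Max_image using assms by (subst Max_le_iff) auto

lemma dV_nonneg: "0 < N \<Longrightarrow> 0 \<le> dV N v t"
  using norm_le_dV[of 0 N 0 v t] by (meson norm_ge_zero order_trans)

section \<open>The switching Cucker--Smale system\<close>

lemma alpha_sw_eq_1: "ts (2 * n) < t \<Longrightarrow> t < ts (2 * n + 1) \<Longrightarrow> alpha_sw ts t = 1"
  by (auto simp: alpha_sw_def)

lemma le_SUP_abs_of_bounded_range:
  fixes f :: "'a \<Rightarrow> real"
  assumes "bounded (range f)"
  shows "f r \<le> (SUP r. \<bar>f r\<bar>)"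
proof -
  obtain B where "\<And>r. \<bar>f r\<bar> \<le> B"
    using assms by (auto simp: bounded_iff)
  then have "\<bar>f r\<bar> \<le> (SUP r. \<bar>f r\<bar>)"
    by (intro cSUP_upper bdd_aboveI2) auto
  then show ?thesis
    by (simp add: abs_le_iff)
qed

lemma two_mult_le_ln_exp_div:
  fixes s :: real
  assumes "exp s < 2"
  shows "2 * s \<le> ln (exp s / (2 - exp s))"
proof -
  define y where "y = exp s"
  have "y * (y - 1)\<^sup>2 \<ge> 0"
    by (simp add: y_def)
  then have "y * y \<le> y / (2 - y)"
    using assms by (simp add: y_def pos_le_divide_eq power2_eq_square algebra_simps)
  then have "ln (y * y) \<le> ln (y / (2 - y))"
    using assms by (simp add: y_def)
  then show ?thesis
    by (simp add: y_def ln_mult)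
qed

lemma two_mult_sum_le_suminf_ln_exp_div:
  fixes s :: "nat \<Rightarrow> real"
  assumes "\<And>p. 0 \<le> s p" "\<And>p. exp (s p) < 2"
    and "summable (\<lambda>p. ln (exp (s p) / (2 - exp (s p))))"
  shows "2 * (\<Sum>p<n. s p) \<le> (\<Sum>p. ln (exp (s p) / (2 - exp (s p))))"
proof -
  have "2 * (\<Sum>p<n. s p) \<le> (\<Sum>p<n. ln (exp (s p) / (2 - exp (s p))))"
    unfolding sum_distrib_left using assms(2) by (intro sum_mono two_mult_le_ln_exp_div)
  also have "\<dots> \<le> (\<Sum>p. ln (exp (s p) / (2 - exp (s p))))"
    using assms order_trans[OF _ two_mult_le_ln_exp_div] by (intro sum_le_suminf) auto
  finally show ?thesis .
qed

lemma filterlim_at_top_bracket_even: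
  fixes ts :: "nat \<Rightarrow> real"
  assumes "mono ts" "filterlim ts at_top sequentially" "ts 0 \<le> t"
  shows "\<exists>n. t \<in> {ts (2 * n)..ts (2 * n + 2)}"
proof -
  have "\<exists>m. t < ts m"
    using assms(2) by (metis filterlim_at_top_dense eventually_sequentially order_refl)
  define m where "m = (LEAST m. t < ts m)"
  have "t < ts m"
    unfolding m_def using \<open>\<exists>m. t < ts m\<close> by (rule LeastI_ex)
  moreover obtain k where "m = Suc k"
    using \<open>t < ts m\<close> assms(3) by (cases m) auto
  moreover have "ts k \<le> t"
    using \<open>m = Suc k\<close> unfolding m_def by (metis Suc_n_not_le_n Least_le not_less)
  moreover have "ts (2 * (k div 2)) \<le> ts k" "ts (Suc k) \<le> ts (2 * (k div 2) + 2)"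
    by (intro monoD[OF assms(1)]; linarith)+
  ultimately have "t \<in> {ts (2 * (k div 2))..ts (2 * (k div 2) + 2)}"
    by auto
  then show ?thesis ..
qed

locale switching_cucker_smale =
  fixes N :: nat and psi :: "real \<Rightarrow> real" and K :: real and ts :: "nat \<Rightarrow> real"
    and x v :: "nat \<Rightarrow> real \<Rightarrow> 'a::real_inner"
  assumes N2: "N \<ge> 2"
    and psi_pos: "\<And>r. psi r > 0"
    and psi_le: "\<And>r. psi r \<le> K"
    and ts_mono: "strict_mono ts"
    and ts0: "ts 0 = 0"
    and v_cont: "\<And>i. i < N \<Longrightarrow> continuous_on {0..} (v i)"
    and v_ode: "\<And>i t. i < N \<Longrightarrow> t > 0 \<Longrightarrow> t \<notin> range ts \<Longrightarrow>
        (v i has_vector_derivative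
           ((1 / (real N - 1)) *\<^sub>R (\<Sum>j\<in>{..<N} - {i}.
              (alpha_sw ts t * psi (norm (x i t - x j t))) *\<^sub>R (v j t - v i t)))) (at t)"
begin

definition weight :: "real \<Rightarrow> nat \<Rightarrow> nat \<Rightarrow> real"
  where "weight t i j = alpha_sw ts t * psi (norm (x i t - x j t)) / (real N - 1)"

abbreviation force :: "real \<Rightarrow> nat \<Rightarrow> 'a"
  where "force t \<equiv> consensus_force N (weight t) (\<lambda>j. v j t)"

lemma K_pos: "K > 0"
  using psi_pos[of 0] psi_le[of 0] by linarith

lemma ts_nonneg: "0 \<le> ts k"
  using ts_mono ts0 by (metis le0 strict_mono_less_eq)

lemma v_has_derivative:
  assumes "i < N" "ts k < t" "t < ts (Suc k)"
  shows "(v i has_vector_derivative force t i) (at t)"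
proof -
  have "t \<notin> range ts"
    using assms(2,3) ts_mono by (auto simp: strict_mono_less)
  moreover have "t > 0"
    using assms(2) ts_nonneg[of k] by linarith
  ultimately show ?thesis
    using v_ode[OF assms(1)]
    by (simp add: consensus_force_def weight_def scaleR_sum_right divide_inverse mult.commute)
qed

lemma norm_force_le:
  assumes "i < N" "\<And>l. l < N \<Longrightarrow> norm (v l t - v i t) \<le> d"
  shows "norm (force t i) \<le> K * d"
proof -
  have "\<bar>weight t i j\<bar> \<le> K / (real N - 1)" for j
    using N2 psi_pos psi_le
    by (simp add: weight_def abs_mult alpha_sw_def abs_of_pos divide_right_mono)
  then have "norm (force t i) \<le> (real N - 1) * (K / (real N - 1)) * d"
    using assms by (intro norm_consensus_force_le) auto
  then show ?thesis
    using N2 by simp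
qed

lemma dV_le_exp_on_interval:
  assumes t: "t \<in> {ts k..ts (Suc k)}"
    and farthest_pair: "\<And>s i j. s \<in> {ts k<..<t} \<Longrightarrow> i < N \<Longrightarrow> j < N \<Longrightarrow>
        (\<And>k l. k < N \<Longrightarrow> l < N \<Longrightarrow> norm (v k s - v l s) \<le> norm (v i s - v j s)) \<Longrightarrow>
        inner (v i s - v j s) (force s i - force s j) \<le> c * (norm (v i s - v j s))\<^sup>2"
  shows "dV N v t \<le> exp (c * (t - ts k)) * dV N v (ts k)"
proof (rule dV_le)
  have "{ts k..t} \<subseteq> {0..}"
    using ts_nonneg[of k] by auto
  then show "norm (v i t - v j t) \<le> exp (c * (t - ts k)) * dV N v (ts k)" if "i < N" "j < N" for i j
    using that t farthest_pair
    by (intro pairwise_distance_exp_growth[where u' = force])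
      (auto intro: continuous_on_subset[OF v_cont] v_has_derivative norm_le_dV)
qed (use N2 in simp)

lemma dV_nonincreasing_on_positive_phase:
  assumes "t \<in> {ts (2 * n)..ts (2 * n + 1)}"
  shows "dV N v t \<le> dV N v (ts (2 * n))"
proof -
  have "dV N v t \<le> exp (0 * (t - ts (2 * n))) * dV N v (ts (2 * n))"
  proof (rule dV_le_exp_on_interval)
    show "t \<in> {ts (2 * n)..ts (Suc (2 * n))}"
      using assms by simp
    fix s i j
    assume s: "s \<in> {ts (2 * n)<..<t}" and "i < N" "j < N"
      and "\<And>k l. k < N \<Longrightarrow> l < N \<Longrightarrow> norm (v k s - v l s) \<le> norm (v i s - v j s)"
    moreover have "alpha_sw ts s = 1"
      using s assms by (intro alpha_sw_eq_1) auto
    then have "0 \<le> weight s k l" for k l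
      using N2 psi_pos[of "norm (x k s - x l s)"] by (simp add: weight_def)
    ultimately show "inner (v i s - v j s) (force s i - force s j) \<le> 0 * (norm (v i s - v j s))\<^sup>2"
      using inner_consensus_force_farthest_pair[of i N j "weight s" "\<lambda>k. v k s"] by simp
  qed
  then show ?thesis
    by simp
qed

lemma dV_exp_growth:
  assumes "t \<in> {ts k..ts (Suc k)}"
  shows "dV N v t \<le> exp (2 * K * (t - ts k)) * dV N v (ts k)"
proof (rule dV_le_exp_on_interval[OF assms])
  fix s i j
  assume "i < N" "j < N"
    and far: "\<And>k l. k < N \<Longrightarrow> l < N \<Longrightarrow> norm (v k s - v l s) \<le> norm (v i s - v j s)"
  define d where "d = norm (v i s - v j s)"
  have "norm (force s i) \<le> K * d" "norm (force s j) \<le> K * d"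
    using far \<open>i < N\<close> \<open>j < N\<close> by (auto simp: d_def norm_minus_commute intro!: norm_force_le)
  then have "norm (force s i - force s j) \<le> 2 * K * d"
    using norm_triangle_ineq4[of "force s i" "force s j"] by simp
  then have "d * norm (force s i - force s j) \<le> d * (2 * K * d)"
    by (simp add: d_def mult_left_mono)
  then show "inner (v i s - v j s) (force s i - force s j) \<le> 2 * K * (norm (v i s - v j s))\<^sup>2"
    using norm_cauchy_schwarz[of "v i s - v j s" "force s i - force s j"]
    by (simp add: d_def power2_eq_square algebra_simps)
qed

lemma dV_le_on_period:
  assumes t: "t \<in> {ts (2 * n)..ts (2 * n + 2)}"
  shows "dV N v t \<le> exp (2 * K * (ts (2 * n + 2) - ts (2 * n + 1))) * dV N v (ts (2 * n))"
proof (cases "t \<le> ts (2 * n + 1)")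
  case True
  then have "dV N v t \<le> dV N v (ts (2 * n))"
    using t by (intro dV_nonincreasing_on_positive_phase) auto
  also have "\<dots> \<le> exp (2 * K * (ts (2 * n + 2) - ts (2 * n + 1))) * dV N v (ts (2 * n))"
  proof -
    have "0 \<le> 2 * K * (ts (2 * n + 2) - ts (2 * n + 1))"
      using K_pos ts_mono by (simp add: strict_mono_less less_imp_le)
    then show ?thesis
      using dV_nonneg[of N v "ts (2 * n)"] N2 by (simp add: mult_le_cancel_right1)
  qed
  finally show ?thesis .
next
  case False
  then have "dV N v t \<le> exp (2 * K * (t - ts (2 * n + 1))) * dV N v (ts (2 * n + 1))"
    using t by (intro dV_exp_growth) auto
  also have "\<dots> \<le> exp (2 * K * (ts (2 * n + 2) - ts (2 * n + 1))) * dV N v (ts (2 * n))"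
  proof (intro mult_mono)
    show "dV N v (ts (2 * n + 1)) \<le> dV N v (ts (2 * n))"
      using ts_mono by (intro dV_nonincreasing_on_positive_phase) (simp add: strict_mono_less_eq)
  qed (use t K_pos N2 in \<open>auto simp: dV_nonneg\<close>)
  finally show ?thesis .
qed

lemma dV_ts_even_le:
  "dV N v (ts (2 * n)) \<le> exp (2 * (\<Sum>p<n. K * (ts (2 * p + 2) - ts (2 * p + 1)))) * dV N v 0"
proof (induction n)
  case 0
  then show ?case
    by (simp add: ts0)
next
  case (Suc n)
  have "dV N v (ts (2 * Suc n)) \<le> exp (2 * K * (ts (2 * n + 2) - ts (2 * n + 1))) * dV N v (ts (2 * n))"
    using ts_mono by (intro dV_le_on_period) (simp add: strict_mono_less_eq)
  also have "\<dots> \<le> exp (2 * K * (ts (2 * n + 2) - ts (2 * n + 1)))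
      * (exp (2 * (\<Sum>p<n. K * (ts (2 * p + 2) - ts (2 * p + 1)))) * dV N v 0)"
    using Suc.IH by simp
  also have "\<dots> = exp (2 * (\<Sum>p<Suc n. K * (ts (2 * p + 2) - ts (2 * p + 1)))) * dV N v 0"
    by (simp add: exp_add[symmetric] algebra_simps)
  finally show ?case .
qed

lemma dV_le_exp_sum:
  assumes "t \<in> {ts (2 * n)..ts (2 * n + 2)}"
  shows "dV N v t \<le> exp (2 * (\<Sum>p<Suc n. K * (ts (2 * p + 2) - ts (2 * p + 1)))) * dV N v 0"
proof -
  have "dV N v t \<le> exp (2 * K * (ts (2 * n + 2) - ts (2 * n + 1))) * dV N v (ts (2 * n))"
    using assms by (rule dV_le_on_period)
  also have "\<dots> \<le> exp (2 * K * (ts (2 * n + 2) - ts (2 * n + 1)))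
      * (exp (2 * (\<Sum>p<n. K * (ts (2 * p + 2) - ts (2 * p + 1)))) * dV N v 0)"
    using dV_ts_even_le by simp
  also have "\<dots> = exp (2 * (\<Sum>p<Suc n. K * (ts (2 * p + 2) - ts (2 * p + 1)))) * dV N v 0"
    by (simp add: exp_add[symmetric] algebra_simps)
  finally show ?thesis .
qed

end

theorem proposition7p11:
  fixes N :: nat and psi :: "real \<Rightarrow> real" and K :: real and ts :: "nat \<Rightarrow> real"
    and x v :: "nat \<Rightarrow> real \<Rightarrow> 'd::euclidean_space"
  assumes N2: "N \<ge> 2"
    and psi_pos: "\<And>r. psi r > 0"
    and psi_bdd: "bounded (range psi)"
    and psi_cont: "continuous_on UNIV psi"
    and K_def: "K = (SUP r. \<bar>psi r\<bar>)"
    and psi_div: "filterlim (\<lambda>X. integral {0..X} (\<lambda>y. Inf (psi ` {0..y}))) at_top at_top"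
    and ts_mono: "strict_mono ts"
    and ts0: "ts 0 = 0"
    and ts_lim: "filterlim ts at_top sequentially"
    and gap_neg: "\<And>n. ts (2*n+2) - ts (2*n+1) < ln 2 / K"
    and gap_pos: "\<And>n. ts (2*n+1) - ts (2*n) > 1 / K"
    and x_cont: "\<And>i. i < N \<Longrightarrow> continuous_on {0..} (x i)"
    and v_cont: "\<And>i. i < N \<Longrightarrow> continuous_on {0..} (v i)"
    and x_ode: "\<And>i t. i < N \<Longrightarrow> t > 0 \<Longrightarrow> (x i has_vector_derivative v i t) (at t)"
    and v_ode: "\<And>i t. i < N \<Longrightarrow> t > 0 \<Longrightarrow> t \<notin> range ts \<Longrightarrow>
        (v i has_vector_derivative
           ((1 / (real N - 1)) *\<^sub>R (\<Sum>j\<in>{..<N} - {i}.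
              (alpha_sw ts t * psi (norm (x i t - x j t))) *\<^sub>R (v j t - v i t)))) (at t)"
    and summ: "summable (\<lambda>p. ln (exp (K * (ts (2*p+2) - ts (2*p+1)))
                                / (2 - exp (K * (ts (2*p+2) - ts (2*p+1))))))"
  shows "\<forall>t\<ge>0. dV N v t \<le> exp (\<Sum>p. ln (exp (K * (ts (2*p+2) - ts (2*p+1)))
                                / (2 - exp (K * (ts (2*p+2) - ts (2*p+1)))))) * dV N v 0"
proof -
  have "psi r \<le> K" for r
    unfolding K_def using psi_bdd by (rule le_SUP_abs_of_bounded_range)
  then interpret switching_cucker_smale N psi K ts x v
    using N2 psi_pos ts_mono ts0 v_cont v_ode by unfold_locales
  have gap_nonneg: "0 \<le> K * (ts (2*p+2) - ts (2*p+1))" for p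
    using K_pos ts_mono by (simp add: strict_mono_less less_imp_le)
  have "K * (ts (2*p+2) - ts (2*p+1)) < ln 2" for p
    using gap_neg[of p] K_pos by (simp add: less_divide_eq mult.commute)
  then have exp_gap_less_2: "exp (K * (ts (2*p+2) - ts (2*p+1))) < 2" for p
    by (metis exp_less_cancel_iff exp_ln zero_less_numeral)
  show ?thesis
  proof (intro allI impI)
    fix t :: real
    assume "0 \<le> t"
    then obtain n where "t \<in> {ts (2 * n)..ts (2 * n + 2)}"
      using filterlim_at_top_bracket_even[OF strict_mono_mono[OF ts_mono] ts_lim] ts0 by auto
    then have "dV N v t \<le> exp (2 * (\<Sum>p<Suc n. K * (ts (2 * p + 2) - ts (2 * p + 1)))) * dV N v 0"
      by (rule dV_le_exp_sum)
    also have "\<dots> \<le> exp (\<Sum>p. ln (exp (K * (ts (2*p+2) - ts (2*p+1)))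
                                / (2 - exp (K * (ts (2*p+2) - ts (2*p+1)))))) * dV N v 0"
      using N2 by (intro mult_right_mono dV_nonneg exp_mono
          two_mult_sum_le_suminf_ln_exp_div[OF gap_nonneg exp_gap_less_2 summ]) simp
    finally show "dV N v t \<le> exp (\<Sum>p. ln (exp (K * (ts (2*p+2) - ts (2*p+1)))
                                / (2 - exp (K * (ts (2*p+2) - ts (2*p+1)))))) * dV N v 0" .
  qed
qed

end
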